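(* Assume the Setting and consider Algorithm 1 with noisy data $y^\delta$ satisfying $\|y^\delta-y\|\le\delta$, $\delta>0$, where $\tau>1$ and $\mu_0>0$ satisfy $1-\frac{1+\eta}{\tau}-\eta-\frac{\mu_0}{4\sigma}>0$. Then the algorithm terminates after finitely many steps, i.e. there is a finite integer $n_\delta$ with $\|F(x_{n_\delta}^\delta)-y^\delta\|\le\tau\delta<\|F(x_n^\delta)-y^\delta\|$ for all $0\le n<n_\delta$.
   Context: Setting. Let $X,Y$ be real Hilbert spaces. Let $\mathcal R:X\to(-\infty,\infty]$ be proper, lower semicontinuous and strongly convex with constant $\sigma>0$, i.e. $\mathcal R(t\bar x+(1-t)x)+\sigma t(1-t)\|\bar x-x\|^2\le t\mathcal R(\bar x)+(1-t)\mathcal R(x)$ for all $\bar x,x\in\mathrm{dom}(\mathcal R)$ and $t\in[0,1]$. For $\xi\in\partial\mathcal R(x)$ (subdifferential) the Bregman distance is $D_{\mathcal R}^{\xi}(z,x)=\mathcal R(z)-\mathcal R(x)-\langle\xi,z-x\rangle$. The convex conjugate $\mathcal R^*$ is differentiable with $\|\nabla\mathcal R^*(\bar\xi)-\nabla\mathcal R^*(\xi)\|\le\|\bar\xi-\xi\|/(2\sigma)$, and $\nabla\mathcal R^*(\xi)=\arg\min_{x\in X}\{\mathcal R(x)-\langle\xi,x\rangle\}$ (unique minimizer), with $\xi\in\partial\mathcal R(\nabla\mathcal R^*(\xi))$. Let $F:\mathrm{dom}(F)\subset X\to Y$ and $y\in Y$. Assume: (b) there are $\rho>0$, $x_0\in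 X$, $\xi_0\in\partial\mathcal R(x_0)$ with $B_{2\rho}(x_0):=\{x:\|x-x_0\|\le 2\rho\}\subset\mathrm{dom}(F)$, and $F(x)=y$ has a solution $\bar x$ with $D_{\mathcal R}^{\xi_0}(\bar x,x_0)\le\sigma\rho^2$; (c) $F$ is weakly closed: if $x_n\in\mathrm{dom}(F)$, $x_n\rightharpoonup x$ and $F(x_n)\to v$, then $x\in\mathrm{dom}(F)$ and $F(x)=v$; (d) there are bounded linear operators $L(x):X\to Y$, $x\in B_{2\rho}(x_0)$, with $x\mapsto L(x)$ continuous on $B_{2\rho}(x_0)$, a constant $\eta\in[0,1)$ with $\|F(x)-F(\bar x)-L(\bar x)(x-\bar x)\|\le\eta\|F(x)-F(\bar x)\|$ for all $x,\bar x\in B_{2\rho}(x_0)$, and a constant $L>0$ with $\|L(x)\|\le L$ on $B_{2\rho}(x_0)$. Algorithm 1 (noisy data $y^\delta$ with $\|y^\delta-y\|\le\delta$, $\delta>0$). Parameters: $\tau>1$, $\beta\in(0,\infty]$, $\mu_0>0$, $\mu_1>0$, and a fixed choice of one of two step-size rules: (constant) $\alpha_n^\delta=\mu_0/L^2$, or (adaptive) $\alpha_n^\delta=\min\{\mu_0\|r_n^\delta\|^2/\|g_n^\delta\|^2,\mu_1\}$ (with $\mu_0\|r_n^\delta\|^2/\|g_n^\delta\|^2:=+\infty$ if $g_n^\delta=0$). Set $\xi_{-1}^\delta=\xi_0^\delta=\xi_0$, $x_0^\delta=x_0=\nabla\mathcal R^*(\xi_0)$. For $n\ge0$: (i) $r_n^\delta:=F(x_n^\delta)-y^\delta$;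 if $\|r_n^\delta\|\le\tau\delta$, stop and output $x_n^\delta$ (the stopping index is denoted $n_\delta$). (ii) $g_n^\delta:=L(x_n^\delta)^*r_n^\delta$ and $\alpha_n^\delta$ by the chosen rule. (iii) $m_n^\delta:=\xi_n^\delta-\xi_{n-1}^\delta$; $\tilde\gamma_0^\delta:=0$ and for $n\ge1$, $\tilde\gamma_n^\delta:=\langle m_n^\delta,x_n^\delta-x_{n-1}^\delta\rangle-(1-\eta)\alpha_{n-1}^\delta\|r_{n-1}^\delta\|^2+(1+\eta)\alpha_{n-1}^\delta\delta\|r_{n-1}^\delta\|+\beta_{n-1}^\delta\tilde\gamma_{n-1}^\delta$. (iv) $\beta_n^\delta:=\min\{\max\{0,(\alpha_n^\delta\langle g_n^\delta,m_n^\delta\rangle-2\sigma\tilde\gamma_n^\delta)/\|m_n^\delta\|^2\},\beta\}$ if $m_n^\delta\ne0$, and $\beta_n^\delta:=0$ if $m_n^\delta=0$. (v) $\xi_{n+1}^\delta:=\xi_n^\delta-\alpha_n^\delta g_n^\delta+\beta_n^\delta m_n^\delta$, $x_{n+1}^\delta:=\nabla\mathcal R^*(\xi_{n+1}^\delta)$. *)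

theory Defs
  imports "HOL-Analysis.Analysis"
begin

definition proper_fun :: "('x \<Rightarrow> ereal) \<Rightarrow> bool" where
  "proper_fun R \<longleftrightarrow> (\<forall>x. R x \<noteq> -\<infinity>) \<and> (\<exists>x. R x \<noteq> \<infinity>)"

definition lsc_fun :: "('x::topological_space \<Rightarrow> ereal) \<Rightarrow> bool" where
  "lsc_fun R \<longleftrightarrow> (\<forall>a::ereal. closed {x. R x \<le> a})"

definition effdom :: "('x \<Rightarrow> ereal) \<Rightarrow> 'x set" where
  "effdom R = {x. R x < \<infinity>}"

definition strongly_convex :: "('x::real_normed_vector \<Rightarrow> ereal) \<Rightarrow> real \<Rightarrow> bool" where
  "strongly_convex R \<sigma> \<longleftrightarrow>
     (\<forall>xb\<in>effdom R. \<forall>x\<in>effdom R. \<forall>t\<in>{0..1::real}.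
        R (t *\<^sub>R xb + (1 - t) *\<^sub>R x) + ereal (\<sigma> * t * (1 - t) * (norm (xb - x))\<^sup>2)
          \<le> ereal t * R xb + ereal (1 - t) * R x)"

definition subdiff :: "('x::real_inner \<Rightarrow> ereal) \<Rightarrow> 'x \<Rightarrow> 'x set" where
  "subdiff R x = {\<xi>. R x \<noteq> \<infinity> \<and> R x \<noteq> -\<infinity> \<and>
                      (\<forall>z. R x + ereal (inner \<xi> (z - x)) \<le> R z)}"

definition bregman :: "('x::real_inner \<Rightarrow> ereal) \<Rightarrow> 'x \<Rightarrow> 'x \<Rightarrow> 'x \<Rightarrow> ereal" where
  "bregman R \<xi> z x = R z - R x - ereal (inner \<xi> (z - x))"

text \<open>Gradient of the convex conjugate: the unique minimiser of R(x) - <xi,x>.\<close>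
definition gradconj :: "('x::real_inner \<Rightarrow> ereal) \<Rightarrow> 'x \<Rightarrow> 'x" where
  "gradconj R \<xi> = (THE x. \<forall>z. R x - ereal (inner \<xi> x) \<le> R z - ereal (inner \<xi> z))"

definition adj :: "('x::real_inner \<Rightarrow>\<^sub>L 'y::real_inner) \<Rightarrow> 'y \<Rightarrow> 'x" where
  "adj A r = (THE g. \<forall>v. inner g v = inner r (blinfun_apply A v))"

definition weak_conv :: "(nat \<Rightarrow> 'x::real_inner) \<Rightarrow> 'x \<Rightarrow> bool" where
  "weak_conv xs x \<longleftrightarrow> (\<forall>v. (\<lambda>n. inner (xs n) v) \<longlonglongrightarrow> inner x v)"

text \<open>Algorithm 1 without the stopping test. The state at index n is
  (xi_n, xi_{n-1}, gamma~_n). The stopping index is the first n with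
  norm (F x_n - y^delta) <= tau delta; iterates after it are irrelevant.\<close>

definition step_size ::
  "bool \<Rightarrow> real \<Rightarrow> real \<Rightarrow> real \<Rightarrow> 'y::real_normed_vector \<Rightarrow> 'x::real_normed_vector \<Rightarrow> real" where
  "step_size adaptive \<mu>0 \<mu>1 Lc r g =
     (if adaptive then (if g = 0 then \<mu>1 else min (\<mu>0 * (norm r)\<^sup>2 / (norm g)\<^sup>2) \<mu>1)
      else \<mu>0 / Lc\<^sup>2)"

fun alg1 ::
  "('x::real_inner \<Rightarrow> ereal) \<Rightarrow> ('x \<Rightarrow> 'y::real_inner) \<Rightarrow> ('x \<Rightarrow> ('x \<Rightarrow>\<^sub>L 'y)) \<Rightarrow>
   'y \<Rightarrow> real \<Rightarrow> real \<Rightarrow> real \<Rightarrow> real \<Rightarrow> bool \<Rightarrow> real \<Rightarrow> real \<Rightarrow> ereal \<Rightarrow> 'x \<Rightarrow>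
   nat \<Rightarrow> 'x \<times> 'x \<times> real" where
  "alg1 R F Lop yd \<delta> \<sigma> \<eta> Lc adaptive \<mu>0 \<mu>1 \<beta> \<xi>0 0 = (\<xi>0, \<xi>0, 0)"
| "alg1 R F Lop yd \<delta> \<sigma> \<eta> Lc adaptive \<mu>0 \<mu>1 \<beta> \<xi>0 (Suc n) =
    (let (\<xi>, \<xi>p, \<gamma>) = alg1 R F Lop yd \<delta> \<sigma> \<eta> Lc adaptive \<mu>0 \<mu>1 \<beta> \<xi>0 n;
         x = gradconj R \<xi>;
         r = F x - yd;
         g = adj (Lop x) r;
         \<alpha> = step_size adaptive \<mu>0 \<mu>1 Lc r g;
         m = \<xi> - \<xi>p;
         b = (if m = 0 then 0 else
                real_of_ereal (min (ereal (max 0 ((\<alpha> * inner g m - 2 * \<sigma> * \<gamma>) / (norm m)\<^sup>2))) \<beta>));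
         \<xi>n = \<xi> - \<alpha> *\<^sub>R g + b *\<^sub>R m;
         xn = gradconj R \<xi>n;
         mn = \<xi>n - \<xi>;
         \<gamma>n = inner mn (xn - x) - (1 - \<eta>) * \<alpha> * (norm r)\<^sup>2
              + (1 + \<eta>) * \<alpha> * \<delta> * norm r + b * \<gamma>
     in (\<xi>n, \<xi>, \<gamma>n))"

definition alg1_x where
  "alg1_x R F Lop yd \<delta> \<sigma> \<eta> Lc adaptive \<mu>0 \<mu>1 \<beta> \<xi>0 n =
     gradconj R (fst (alg1 R F Lop yd \<delta> \<sigma> \<eta> Lc adaptive \<mu>0 \<mu>1 \<beta> \<xi>0 n))"

end

theory Submission
  imports Defs
begin

text \<open>Write D_n for the Bregman distance of the solution xbar from the iterate x_n with respect
  to xi_n. As long as the residual exceeds tau delta, D_n drops by a fixed amount in every step.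
  Strong convexity of R gives the three-point estimate
  D_{n+1} - D_n \<le> |xi_{n+1} - xi_n|^2/(4 sigma) + <xi_{n+1} - xi_n, x_n - xbar>;
  the tangential cone condition makes the gradient part of the update a descent direction, and
  beta_n is chosen so that the momentum part is paid for by the quantity gamma~_n, which
  satisfies the invariant <m_n, x_n - xbar> \<le> gamma~_n. Since D_n \<ge> 0, the residual must drop
  below tau delta after finitely many steps. The iterates never leave the ball B_{2 rho}(x_0),
  because sigma |x_n - xbar|^2 \<le> D_n \<le> D_0 \<le> sigma rho^2.\<close>

section \<open>Minimizers of strongly convex functionals\<close>

lemma midpoint_strongly_convex_attains_min:
  fixes f :: "'a::{real_normed_vector,complete_space} \<Rightarrow> real"
  assumes nonempty: "S \<noteq> {}" and c_pos: "c > 0"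
    and bounded: "\<And>z. z \<in> S \<Longrightarrow> B \<le> f z"
    and midpoint: "\<And>a b. a \<in> S \<Longrightarrow> b \<in> S \<Longrightarrow> (1/2) *\<^sub>R (a + b) \<in> S \<and>
                     f ((1/2) *\<^sub>R (a + b)) + c * (norm (a - b))\<^sup>2 \<le> (f a + f b) / 2"
    and closed: "\<And>z x m. (\<forall>k. z k \<in> S) \<Longrightarrow> z \<longlonglongrightarrow> x \<Longrightarrow>
                   (\<forall>k. f (z k) \<le> m + 1 / real (Suc k)) \<Longrightarrow> x \<in> S \<and> f x \<le> m"
  shows "\<exists>x\<in>S. \<forall>z\<in>S. f x \<le> f z"
proof -
  define m where "m = Inf (f ` S)"
  have bdd: "bdd_below (f ` S)" by (meson bounded bdd_belowI2)
  have m_le: "m \<le> f z" if "z \<in> S" for z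
    unfolding m_def using bdd that by (simp add: cInf_lower)
  have "\<exists>z\<in>S. f z < m + 1 / real (Suc k)" for k
  proof -
    have "Inf (f ` S) < m + 1 / real (Suc k)" unfolding m_def by simp
    then show ?thesis using nonempty bdd by (subst (asm) cInf_less_iff) auto
  qed
  then obtain z where zS: "\<And>k. z k \<in> S" and zf: "\<And>k. f (z k) < m + 1 / real (Suc k)"
    by metis
  text \<open>The midpoint of two almost-minimizers is no better than m, so they are close.\<close>
  have close: "c * (norm (z k - z l))\<^sup>2 \<le> 1 / real (Suc N)" if "N \<le> k" "N \<le> l" for k l N
  proof -
    have "m \<le> f ((1/2) *\<^sub>R (z k + z l))" using m_le midpoint[OF zS zS] by blast
    moreover have "2 * f ((1/2) *\<^sub>R (z k + z l)) + 2 * (c * (norm (z k - z l))\<^sup>2) \<le> f (z k) + f (z l)"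
      using midpoint[OF zS zS, of k l] unfolding add_divide_distrib by linarith
    moreover have "1 / real (Suc k) \<le> 1 / real (Suc N)" "1 / real (Suc l) \<le> 1 / real (Suc N)"
      using that by (auto simp: divide_simps)
    ultimately show ?thesis using zf[of k] zf[of l] by linarith
  qed
  have "Cauchy z"
  proof (rule CauchyI)
    fix e :: real assume e: "0 < e"
    then have "c * e\<^sup>2 > 0" using c_pos by simp
    then obtain N where N: "inverse (real (Suc N)) < c * e\<^sup>2" using reals_Archimedean by blast
    have "norm (z k - z l) < e" if "N \<le> k" "N \<le> l" for k l
    proof -
      have "c * (norm (z k - z l))\<^sup>2 < c * e\<^sup>2"
        using close[OF that] N by (simp add: inverse_eq_divide)
      then have "(norm (z k - z l))\<^sup>2 < e\<^sup>2" using c_pos by simp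
      then show ?thesis using e by (meson power_less_imp_less_base less_imp_le)
    qed
    then show "\<exists>M. \<forall>k\<ge>M. \<forall>l\<ge>M. norm (z k - z l) < e" by blast
  qed
  then obtain x where "z \<longlonglongrightarrow> x" using Cauchy_convergent_iff convergent_def by blast
  then have "x \<in> S \<and> f x \<le> m" using closed[of z x m] zS zf by (auto intro: less_imp_le)
  then show ?thesis using m_le by (meson order_trans)
qed

lemma linear_minus_quadratic_le:
  fixes a t \<sigma> :: real
  assumes "\<sigma> > 0"
  shows "a * t - \<sigma> * t\<^sup>2 \<le> a\<^sup>2 / (4 * \<sigma>)"
proof -
  have "a\<^sup>2 / (4 * \<sigma>) - (a * t - \<sigma> * t\<^sup>2) = (2 * \<sigma> * t - a)\<^sup>2 / (4 * \<sigma>)"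
    using assms by (simp add: field_simps power2_eq_square)
  moreover have "(2 * \<sigma> * t - a)\<^sup>2 / (4 * \<sigma>) \<ge> 0" using assms by simp
  ultimately show ?thesis by linarith
qed

lemma proper_effdom_ereal:
  assumes "proper_fun R" "z \<in> effdom R"
  shows "R z = ereal (real_of_ereal (R z))"
  using assms unfolding proper_fun_def effdom_def by (cases "R z") auto

lemma lsc_fun_limit_le:
  fixes R :: "'a::metric_space \<Rightarrow> ereal"
  assumes proper: "proper_fun R" and lsc: "lsc_fun R"
    and dom: "\<And>k. z k \<in> effdom R" and conv: "z \<longlonglongrightarrow> x"
    and bound: "\<And>k. real_of_ereal (R (z k)) \<le> u k" and u: "u \<longlonglongrightarrow> c"
  shows "x \<in> effdom R \<and> real_of_ereal (R x) \<le> c"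
proof -
  have le: "R x \<le> ereal (c + e)" if "e > 0" for e
  proof -
    obtain K where K: "\<And>k. K \<le> k \<Longrightarrow> u k < c + e"
      using order_tendstoD(2)[OF u, of "c + e"] \<open>e > 0\<close> by (auto simp: eventually_sequentially)
    have "z (k + K) \<in> {y. R y \<le> ereal (c + e)}" for k
    proof -
      have "real_of_ereal (R (z (k + K))) \<le> c + e" using K[of "k + K"] bound[of "k + K"] by simp
      then have "R (z (k + K)) \<le> ereal (c + e)"
        by (subst proper_effdom_ereal[OF proper dom[of "k + K"]]) simp
      then show ?thesis by simp
    qed
    moreover have "closed {y. R y \<le> ereal (c + e)}" using lsc unfolding lsc_fun_def by blast
    ultimately have "x \<in> {y. R y \<le> ereal (c + e)}"
      using closed_sequentially[OF _ _ LIMSEQ_ignore_initial_segment[OF conv]] by blast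
    then show ?thesis by simp
  qed
  have "R x \<le> ereal (c + 1)" using le by simp
  then have x_dom: "x \<in> effdom R" unfolding effdom_def by auto
  have "real_of_ereal (R x) \<le> c + e" if "e > 0" for e
    using le[OF that] by (subst (asm) proper_effdom_ereal[OF proper x_dom]) simp
  then show ?thesis using x_dom by (meson field_le_epsilon)
qed

text \<open>x minimizes R - <xi, _>, i.e. xi is a subgradient of R at x; stating this with the real
  values of R on its effective domain keeps the arithmetic out of ereal.\<close>
definition tilted_minimizer :: "('a::real_inner \<Rightarrow> ereal) \<Rightarrow> 'a \<Rightarrow> 'a \<Rightarrow> bool" where
  "tilted_minimizer R \<xi> x \<longleftrightarrow> x \<in> effdom R \<and>
     (\<forall>z\<in>effdom R. real_of_ereal (R x) + inner \<xi> (z - x) \<le> real_of_ereal (R z))"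

lemma strongly_convex_realD:
  fixes R :: "'a::real_normed_vector \<Rightarrow> ereal"
  assumes proper: "proper_fun R" and sc: "strongly_convex R \<sigma>"
    and a: "a \<in> effdom R" and b: "b \<in> effdom R" and t: "0 \<le> t" "t \<le> 1"
  shows "t *\<^sub>R a + (1 - t) *\<^sub>R b \<in> effdom R \<and>
    real_of_ereal (R (t *\<^sub>R a + (1 - t) *\<^sub>R b)) + \<sigma> * t * (1 - t) * (norm (a - b))\<^sup>2
      \<le> t * real_of_ereal (R a) + (1 - t) * real_of_ereal (R b)"
proof -
  let ?p = "t *\<^sub>R a + (1 - t) *\<^sub>R b"
  have "R ?p + ereal (\<sigma> * t * (1 - t) * (norm (a - b))\<^sup>2) \<le> ereal t * R a + ereal (1 - t) * R b"
    using sc a b t unfolding strongly_convex_def by auto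
  also have "\<dots> = ereal (t * real_of_ereal (R a) + (1 - t) * real_of_ereal (R b))"
    by (subst proper_effdom_ereal[OF proper a], subst proper_effdom_ereal[OF proper b]) simp
  finally have le: "R ?p + ereal (\<sigma> * t * (1 - t) * (norm (a - b))\<^sup>2)
      \<le> ereal (t * real_of_ereal (R a) + (1 - t) * real_of_ereal (R b))" .
  moreover have "R ?p \<noteq> -\<infinity>" using proper unfolding proper_fun_def by auto
  moreover have "R ?p \<noteq> \<infinity>" using le by auto
  ultimately show ?thesis unfolding effdom_def by (cases "R ?p") auto
qed

lemma tilted_minimizer_quadratic_growth:
  fixes R :: "'a::real_inner \<Rightarrow> ereal"
  assumes proper: "proper_fun R" and sc: "strongly_convex R \<sigma>"
    and min: "tilted_minimizer R \<xi> x" and z: "z \<in> effdom R"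
  shows "real_of_ereal (R x) + inner \<xi> (z - x) + \<sigma> * (norm (z - x))\<^sup>2 \<le> real_of_ereal (R z)"
proof -
  define gap where "gap = real_of_ereal (R z) - real_of_ereal (R x) - inner \<xi> (z - x)"
  define N where "N = (norm (z - x))\<^sup>2"
  have x: "x \<in> effdom R" using min unfolding tilted_minimizer_def by blast
  have chord: "\<sigma> * (1 - t) * N \<le> gap" if t: "0 < t" "t \<le> 1" for t
  proof -
    let ?p = "t *\<^sub>R z + (1 - t) *\<^sub>R x"
    have p: "?p \<in> effdom R" and conv: "real_of_ereal (R ?p) + \<sigma> * t * (1 - t) * N
        \<le> t * real_of_ereal (R z) + (1 - t) * real_of_ereal (R x)"
      using strongly_convex_realD[OF proper sc z x] t unfolding N_def by auto
    have "?p - x = t *\<^sub>R (z - x)" by (simp add: algebra_simps)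
    then have "real_of_ereal (R x) + t * inner \<xi> (z - x) \<le> real_of_ereal (R ?p)"
      using min p unfolding tilted_minimizer_def by (metis inner_scaleR_right)
    then have "t * (\<sigma> * (1 - t) * N) \<le> t * gap"
      using conv unfolding gap_def by (simp add: algebra_simps)
    then show ?thesis using t by simp
  qed
  have "((\<lambda>t. \<sigma> * (1 - t) * N) \<longlongrightarrow> \<sigma> * (1 - 0) * N) (at_right 0)"
    by (intro tendsto_intros)
  moreover have "eventually (\<lambda>t. \<sigma> * (1 - t) * N \<le> gap) (at_right (0::real))"
    unfolding eventually_at_right_field using chord by (intro exI[of _ 1]) auto
  ultimately have "\<sigma> * (1 - 0) * N \<le> gap" by (rule tendsto_upperbound) simp
  then show ?thesis unfolding gap_def N_def by simp
qed

lemma tilted_minimizer_unique: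
  fixes R :: "'a::real_inner \<Rightarrow> ereal"
  assumes proper: "proper_fun R" and sc: "strongly_convex R \<sigma>" and \<sigma>: "\<sigma> > 0"
    and x: "tilted_minimizer R \<xi> x" and x': "tilted_minimizer R \<xi> x'"
  shows "x = x'"
proof -
  have "x \<in> effdom R" "x' \<in> effdom R" using x x' unfolding tilted_minimizer_def by auto
  then have "real_of_ereal (R x) + inner \<xi> (x' - x) + \<sigma> * (norm (x' - x))\<^sup>2 \<le> real_of_ereal (R x')"
    and "real_of_ereal (R x') + inner \<xi> (x - x') + \<sigma> * (norm (x - x'))\<^sup>2 \<le> real_of_ereal (R x)"
    using tilted_minimizer_quadratic_growth[OF proper sc] x x' by blast+
  moreover have "inner \<xi> (x - x') = - inner \<xi> (x' - x)" "norm (x - x') = norm (x' - x)"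
    by (simp_all add: inner_diff_right norm_minus_commute)
  ultimately have "2 * \<sigma> * (norm (x' - x))\<^sup>2 \<le> 0" by simp
  then show ?thesis using \<sigma> by (simp add: mult_le_0_iff)
qed

text \<open>Strong convexity makes R coercive: quadratic growth around one tilted minimizer bounds
  every other tilted objective from below, and a minimizing sequence then converges.\<close>
lemma tilted_minimizer_exists:
  fixes R :: "'a::{real_inner,complete_space} \<Rightarrow> ereal"
  assumes proper: "proper_fun R" and lsc: "lsc_fun R" and sc: "strongly_convex R \<sigma>"
    and \<sigma>: "\<sigma> > 0" and min0: "tilted_minimizer R \<xi>0 x0"
  shows "\<exists>x. tilted_minimizer R \<xi> x"
proof -
  let ?f = "\<lambda>z. real_of_ereal (R z) - inner \<xi> z"
  have x0: "x0 \<in> effdom R" using min0 unfolding tilted_minimizer_def by auto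
  have bounded: "?f x0 - (norm (\<xi>0 - \<xi>))\<^sup>2 / (4 * \<sigma>) \<le> ?f z" if z: "z \<in> effdom R" for z
  proof -
    have "inner \<xi>0 (z - x0) - inner \<xi> z = inner (\<xi>0 - \<xi>) (z - x0) - inner \<xi> x0"
      by (simp add: inner_diff_left inner_diff_right)
    moreover have "- (norm (\<xi>0 - \<xi>) * norm (z - x0)) \<le> inner (\<xi>0 - \<xi>) (z - x0)"
      using Cauchy_Schwarz_ineq2[of "\<xi>0 - \<xi>" "z - x0"] by linarith
    ultimately show ?thesis
      using tilted_minimizer_quadratic_growth[OF proper sc min0 z]
        linear_minus_quadratic_le[OF \<sigma>, of "norm (\<xi>0 - \<xi>)" "norm (z - x0)"] by linarith
  qed
  have midpoint: "(1/2) *\<^sub>R (a + b) \<in> effdom R \<and>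
      ?f ((1/2) *\<^sub>R (a + b)) + (\<sigma>/4) * (norm (a - b))\<^sup>2 \<le> (?f a + ?f b) / 2"
    if a: "a \<in> effdom R" and b: "b \<in> effdom R" for a b
  proof -
    have "(1/2) *\<^sub>R a + (1 - 1/2) *\<^sub>R b = (1/2) *\<^sub>R (a + b)" by (simp add: algebra_simps)
    moreover have "inner \<xi> ((1/2) *\<^sub>R (a + b)) = (inner \<xi> a + inner \<xi> b) / 2"
      by (simp add: inner_add_right)
    ultimately show ?thesis
      using strongly_convex_realD[OF proper sc a b, of "1/2"] by (auto simp: field_simps)
  qed
  have closed: "x \<in> effdom R \<and> ?f x \<le> m"
    if "\<forall>k. z k \<in> effdom R" "z \<longlonglongrightarrow> x" "\<forall>k. ?f (z k) \<le> m + 1 / real (Suc k)" for z x m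
  proof -
    have lim: "(\<lambda>k. m + 1 / real (Suc k) + inner \<xi> (z k)) \<longlonglongrightarrow> m + 0 + inner \<xi> x"
      using that(2) by (intro tendsto_intros LIMSEQ_Suc[OF lim_inverse_n'[unfolded inverse_eq_divide]])
    have bound: "real_of_ereal (R (z k)) \<le> m + 1 / real (Suc k) + inner \<xi> (z k)" for k
      using that(3) by (simp add: algebra_simps)
    have "x \<in> effdom R \<and> real_of_ereal (R x) \<le> m + 0 + inner \<xi> x"
      using lsc_fun_limit_le[OF proper lsc _ that(2) bound lim] that(1) by blast
    then show ?thesis by simp
  qed
  have "\<exists>x\<in>effdom R. \<forall>z\<in>effdom R. ?f x \<le> ?f z"
  proof (rule midpoint_strongly_convex_attains_min[where c = "\<sigma>/4"])
    show "effdom R \<noteq> {}" using x0 by blast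
    show "\<sigma> / 4 > 0" using \<sigma> by simp
  qed (fact bounded midpoint closed)+
  then obtain x where "x \<in> effdom R" "\<forall>z\<in>effdom R. ?f x \<le> ?f z" by blast
  then have "tilted_minimizer R \<xi> x" unfolding tilted_minimizer_def by (auto simp: inner_diff_right)
  then show ?thesis ..
qed

lemma tilted_minimizer_iff:
  fixes R :: "'a::real_inner \<Rightarrow> ereal"
  assumes proper: "proper_fun R"
  shows "tilted_minimizer R \<xi> x \<longleftrightarrow> (\<forall>z. R x - ereal (inner \<xi> x) \<le> R z - ereal (inner \<xi> z))"
proof -
  have fin: "R x \<noteq> -\<infinity>" "\<exists>z. R z \<noteq> \<infinity>" using proper unfolding proper_fun_def by auto
  show ?thesis
  proof
    assume min: "tilted_minimizer R \<xi> x"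
    then have x: "x \<in> effdom R" unfolding tilted_minimizer_def by blast
    show "\<forall>z. R x - ereal (inner \<xi> x) \<le> R z - ereal (inner \<xi> z)"
    proof
      fix z show "R x - ereal (inner \<xi> x) \<le> R z - ereal (inner \<xi> z)"
      proof (cases "z \<in> effdom R")
        case True
        then have "real_of_ereal (R x) - inner \<xi> x \<le> real_of_ereal (R z) - inner \<xi> z"
          using min unfolding tilted_minimizer_def by (auto simp: inner_diff_right)
        then show ?thesis
          by (subst proper_effdom_ereal[OF proper x], subst proper_effdom_ereal[OF proper True]) simp
      next
        case False
        then show ?thesis using x unfolding effdom_def by auto
      qed
    qed
  next
    assume le: "\<forall>z. R x - ereal (inner \<xi> x) \<le> R z - ereal (inner \<xi> z)"
    obtain z0 where "R z0 \<noteq> \<infinity>" using fin by blast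
    then have "R x \<noteq> \<infinity>" using le[rule_format, of z0] by (cases "R z0") auto
    then have x: "x \<in> effdom R" unfolding effdom_def by (simp add: less_top)
    have "real_of_ereal (R x) + inner \<xi> (z - x) \<le> real_of_ereal (R z)" if z: "z \<in> effdom R" for z
    proof -
      obtain u w where "R x = ereal u" "R z = ereal w"
        using proper_effdom_ereal[OF proper x] proper_effdom_ereal[OF proper z] by metis
      then show ?thesis using le[rule_format, of z] by (simp add: inner_diff_right)
    qed
    then show "tilted_minimizer R \<xi> x" using x unfolding tilted_minimizer_def by blast
  qed
qed

lemma gradconj_eqI:
  fixes R :: "'a::real_inner \<Rightarrow> ereal"
  assumes proper: "proper_fun R" and sc: "strongly_convex R \<sigma>" and \<sigma>: "\<sigma> > 0"
    and min: "tilted_minimizer R \<xi> x"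
  shows "gradconj R \<xi> = x"
  unfolding gradconj_def
proof (rule the_equality)
  show "\<forall>z. R x - ereal (inner \<xi> x) \<le> R z - ereal (inner \<xi> z)"
    using min tilted_minimizer_iff[OF proper] by blast
next
  fix x' assume "\<forall>z. R x' - ereal (inner \<xi> x') \<le> R z - ereal (inner \<xi> z)"
  then have "tilted_minimizer R \<xi> x'" using tilted_minimizer_iff[OF proper] by blast
  then show "x' = x" using tilted_minimizer_unique[OF proper sc \<sigma> _ min] by blast
qed

lemma tilted_minimizer_gradconj:
  fixes R :: "'a::{real_inner,complete_space} \<Rightarrow> ereal"
  assumes "proper_fun R" "lsc_fun R" "strongly_convex R \<sigma>" "\<sigma> > 0" "tilted_minimizer R \<xi>0 x0"
  shows "tilted_minimizer R \<xi> (gradconj R \<xi>)"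
  using tilted_minimizer_exists[OF assms] gradconj_eqI[OF assms(1,3,4)] by metis

lemma subdiff_tilted_minimizer:
  fixes R :: "'a::real_inner \<Rightarrow> ereal"
  assumes "proper_fun R" "\<xi> \<in> subdiff R x"
  shows "tilted_minimizer R \<xi> x"
proof -
  have "R x - ereal (inner \<xi> x) \<le> R z - ereal (inner \<xi> z)" for z
  proof -
    obtain v where v: "R x = ereal v" using assms(2) unfolding subdiff_def by (cases "R x") auto
    have "ereal (v + inner \<xi> (z - x)) \<le> R z" using assms(2) v unfolding subdiff_def by auto
    then show ?thesis using v by (cases "R z") (auto simp: inner_diff_right)
  qed
  then show ?thesis using tilted_minimizer_iff[OF assms(1)] by blast
qed

lemma tilted_minimizer_three_point:
  fixes R :: "'a::real_inner \<Rightarrow> ereal"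
  assumes proper: "proper_fun R" and sc: "strongly_convex R \<sigma>" and \<sigma>: "\<sigma> > 0"
    and x: "tilted_minimizer R \<xi> x" and x': "tilted_minimizer R \<xi>' x'" and z: "z \<in> effdom R"
  shows "(real_of_ereal (R z) - real_of_ereal (R x') - inner \<xi>' (z - x'))
           - (real_of_ereal (R z) - real_of_ereal (R x) - inner \<xi> (z - x))
         \<le> (norm (\<xi>' - \<xi>))\<^sup>2 / (4 * \<sigma>) + inner (\<xi>' - \<xi>) (x - z)"
proof -
  have "x' \<in> effdom R" using x' unfolding tilted_minimizer_def by blast
  then have "real_of_ereal (R x) + inner \<xi> (x' - x) + \<sigma> * (norm (x' - x))\<^sup>2 \<le> real_of_ereal (R x')"
    using tilted_minimizer_quadratic_growth[OF proper sc x] by blast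
  moreover have "inner (\<xi>' - \<xi>) (x' - x) \<le> norm (\<xi>' - \<xi>) * norm (x' - x)"
    using Cauchy_Schwarz_ineq2 abs_le_D1 by blast
  moreover have "norm (\<xi>' - \<xi>) * norm (x' - x) - \<sigma> * (norm (x' - x))\<^sup>2 \<le> (norm (\<xi>' - \<xi>))\<^sup>2 / (4 * \<sigma>)"
    using linear_minus_quadratic_le[OF \<sigma>] .
  moreover have "inner (\<xi>' - \<xi>) (x' - x) = inner \<xi>' (x' - x) - inner \<xi> (x' - x)"
    "(real_of_ereal (R z) - real_of_ereal (R x') - inner \<xi>' (z - x'))
       - (real_of_ereal (R z) - real_of_ereal (R x) - inner \<xi> (z - x))
     = real_of_ereal (R x) - real_of_ereal (R x') + inner \<xi>' (x' - x) + inner (\<xi>' - \<xi>) (x - z)"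
    by (simp_all add: inner_diff_left inner_diff_right algebra_simps)
  ultimately show ?thesis by linarith
qed

section \<open>Hilbert space adjoints\<close>

lemma linear_plus_quadratic_nonneg_imp_zero:
  fixes k c :: real
  assumes "c \<ge> 0" and nonneg: "\<And>t. 0 \<le> t * k + t\<^sup>2 * c"
  shows "k = 0"
proof -
  define t where "t = - k / (c + 1)"
  have "k + t * c = k / (c + 1)"
    using \<open>c \<ge> 0\<close> unfolding t_def by (simp add: field_simps)
  have "t * k + t\<^sup>2 * c = t * (k + t * c)" by (simp add: power2_eq_square algebra_simps)
  also have "\<dots> = - (k / (c + 1))\<^sup>2"
    unfolding \<open>k + t * c = k / (c + 1)\<close> by (simp add: t_def power2_eq_square)
  finally have "t * k + t\<^sup>2 * c = - (k / (c + 1))\<^sup>2" .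
  then have "(k / (c + 1))\<^sup>2 \<le> 0" using nonneg[of t] by simp
  then show ?thesis using \<open>c \<ge> 0\<close> by simp
qed

text \<open>The adjoint applied to r is the minimizer of |v|^2/2 - <r, A v>.\<close>
lemma blinfun_adjoint_exists:
  fixes A :: "'a::{real_inner,complete_space} \<Rightarrow>\<^sub>L 'b::real_inner"
  shows "\<exists>g. \<forall>v. inner g v = inner r (blinfun_apply A v)"
proof -
  let ?f = "\<lambda>v. (norm v)\<^sup>2 / 2 - inner r (blinfun_apply A v)"
  have bounded: "- (norm r * norm A)\<^sup>2 / 2 \<le> ?f z" for z
  proof -
    have "inner r (blinfun_apply A z) \<le> norm r * norm (blinfun_apply A z)"
      by (rule Cauchy_Schwarz_ineq2[THEN abs_le_D1])
    also have "\<dots> \<le> norm r * (norm A * norm z)" by (simp add: mult_left_mono norm_blinfun)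
    finally have "inner r (blinfun_apply A z) \<le> norm r * (norm A * norm z)" .
    moreover have "0 \<le> (norm z - norm r * norm A)\<^sup>2" by simp
    ultimately show ?thesis by (simp add: power2_eq_square algebra_simps)
  qed
  have midpoint: "(1/2) *\<^sub>R (a + b) \<in> UNIV \<and>
      ?f ((1/2) *\<^sub>R (a + b)) + (1/8) * (norm (a - b))\<^sup>2 \<le> (?f a + ?f b) / 2" for a b :: 'a
  proof -
    have "(norm ((1/2) *\<^sub>R (a + b)))\<^sup>2 + (1/4) * (norm (a - b))\<^sup>2 = ((norm a)\<^sup>2 + (norm b)\<^sup>2) / 2"
      by (simp add: power2_norm_eq_inner inner_add_left inner_add_right inner_diff_left
          inner_diff_right inner_commute algebra_simps)
    moreover have "inner r (blinfun_apply A ((1/2) *\<^sub>R (a + b)))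
        = (inner r (blinfun_apply A a) + inner r (blinfun_apply A b)) / 2"
      by (simp add: blinfun.add_right blinfun.scaleR_right inner_add_right)
    ultimately show ?thesis by (simp add: add_divide_distrib diff_divide_distrib)
  qed
  have closed: "x \<in> UNIV \<and> ?f x \<le> m"
    if "z \<longlonglongrightarrow> x" "\<forall>k. ?f (z k) \<le> m + 1 / real (Suc k)" for z x m
  proof -
    have "(\<lambda>k. ?f (z k)) \<longlonglongrightarrow> ?f x" using that(1) by (intro tendsto_intros) auto
    moreover have "(\<lambda>k. m + 1 / real (Suc k)) \<longlonglongrightarrow> m + 0"
      by (intro tendsto_intros LIMSEQ_Suc[OF lim_inverse_n'[unfolded inverse_eq_divide]])
    ultimately show ?thesis using that(2) by (auto intro: LIMSEQ_le)
  qed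
  have "\<exists>g\<in>UNIV. \<forall>z\<in>UNIV. ?f g \<le> ?f z"
  proof (rule midpoint_strongly_convex_attains_min[where c = "1/8" and B = "- (norm r * norm A)\<^sup>2 / 2"])
    show "\<And>z x m. \<forall>k. z k \<in> UNIV \<Longrightarrow> z \<longlonglongrightarrow> x \<Longrightarrow> \<forall>k. ?f (z k) \<le> m + 1 / real (Suc k)
        \<Longrightarrow> x \<in> UNIV \<and> ?f x \<le> m"
      using closed by blast
  qed (use bounded midpoint in auto)
  then obtain g where g: "\<And>z. ?f g \<le> ?f z" by blast
  have "inner g v = inner r (blinfun_apply A v)" for v
  proof -
    define k where "k = inner g v - inner r (blinfun_apply A v)"
    have expand: "?f (g + t *\<^sub>R v) - ?f g = t * k + t\<^sup>2 * ((norm v)\<^sup>2 / 2)" for t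
      unfolding k_def power2_norm_eq_inner
      by (simp add: blinfun.add_right blinfun.scaleR_right inner_add_left inner_add_right
          inner_commute power2_eq_square algebra_simps)
    have "0 \<le> t * k + t\<^sup>2 * ((norm v)\<^sup>2 / 2)" for t
      using g[of "g + t *\<^sub>R v"] expand[of t] by linarith
    then have "k = 0" by (rule linear_plus_quadratic_nonneg_imp_zero[rotated]) simp
    then show ?thesis unfolding k_def by simp
  qed
  then show ?thesis by blast
qed

lemma adj_inner:
  fixes A :: "'a::{real_inner,complete_space} \<Rightarrow>\<^sub>L 'b::real_inner"
  shows "inner (adj A r) v = inner r (blinfun_apply A v)"
proof -
  obtain g where g: "\<forall>v. inner g v = inner r (blinfun_apply A v)"
    using blinfun_adjoint_exists by blast
  have "adj A r = g" unfolding adj_def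
  proof (rule the_equality)
    fix g' assume "\<forall>v. inner g' v = inner r (blinfun_apply A v)"
    then have "inner (g' - g) (g' - g) = 0" using g by (simp add: inner_diff_left)
    then show "g' = g" by simp
  qed (fact g)
  then show ?thesis using g by simp
qed

lemma norm_adj_le:
  fixes A :: "'a::{real_inner,complete_space} \<Rightarrow>\<^sub>L 'b::real_inner"
  shows "norm (adj A r) \<le> norm A * norm r"
proof -
  let ?g = "adj A r"
  have "norm ?g * norm ?g = inner r (blinfun_apply A ?g)"
    using adj_inner[of A r ?g] by (simp add: power2_norm_eq_inner[symmetric] power2_eq_square)
  also have "\<dots> \<le> norm r * (norm A * norm ?g)"
    by (meson Cauchy_Schwarz_ineq2 abs_le_D1 mult_left_mono norm_blinfun norm_ge_zero order_trans)
  also have "\<dots> = (norm A * norm r) * norm ?g" by simp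
  finally show ?thesis by (cases "norm ?g = 0") auto
qed

section \<open>Convergence analysis of the iteration\<close>

lemma step_size_bounds:
  fixes r :: "'y::real_normed_vector" and g :: "'x::real_normed_vector"
  assumes Lc: "Lc > 0" and \<mu>0: "\<mu>0 > 0" and \<mu>1: "\<mu>1 > 0" and g: "norm g \<le> Lc * norm r"
  shows "min (\<mu>0 / Lc\<^sup>2) \<mu>1 \<le> step_size adaptive \<mu>0 \<mu>1 Lc r g"
    and "step_size adaptive \<mu>0 \<mu>1 Lc r g * (norm g)\<^sup>2 \<le> \<mu>0 * (norm r)\<^sup>2"
proof -
  have "(norm g)\<^sup>2 \<le> Lc\<^sup>2 * (norm r)\<^sup>2"
    using g by (metis norm_ge_zero power_mono power_mult_distrib)
  then have const: "\<mu>0 / Lc\<^sup>2 * (norm g)\<^sup>2 \<le> \<mu>0 * (norm r)\<^sup>2"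
    using Lc \<mu>0 by (simp add: field_simps)
  have "min (\<mu>0 / Lc\<^sup>2) \<mu>1 \<le> step_size adaptive \<mu>0 \<mu>1 Lc r g \<and>
      step_size adaptive \<mu>0 \<mu>1 Lc r g * (norm g)\<^sup>2 \<le> \<mu>0 * (norm r)\<^sup>2"
  proof (cases "adaptive \<and> g \<noteq> 0")
    case True
    then have g2: "(norm g)\<^sup>2 > 0" by simp
    have step: "step_size adaptive \<mu>0 \<mu>1 Lc r g = min (\<mu>0 * (norm r)\<^sup>2 / (norm g)\<^sup>2) \<mu>1"
      using True unfolding step_size_def by simp
    have "\<mu>0 / Lc\<^sup>2 \<le> \<mu>0 * (norm r)\<^sup>2 / (norm g)\<^sup>2"
      using const g2 by (simp add: pos_le_divide_eq)
    moreover have "min (\<mu>0 * (norm r)\<^sup>2 / (norm g)\<^sup>2) \<mu>1 * (norm g)\<^sup>2 \<le> \<mu>0 * (norm r)\<^sup>2"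
      using g2 by (simp add: min_mult_distrib_right min.coboundedI1)
    ultimately show ?thesis unfolding step by auto
  qed (use const \<mu>0 in \<open>auto simp: step_size_def\<close>)
  then show "min (\<mu>0 / Lc\<^sup>2) \<mu>1 \<le> step_size adaptive \<mu>0 \<mu>1 Lc r g"
    and "step_size adaptive \<mu>0 \<mu>1 Lc r g * (norm g)\<^sup>2 \<le> \<mu>0 * (norm r)\<^sup>2" by auto
qed

lemma momentum_coefficient_bounds:
  fixes m :: "'a::real_normed_vector"
  assumes \<beta>: "\<beta> > 0"
    and b: "b = (if m = 0 then 0 else real_of_ereal (min (ereal (max 0 (c / (norm m)\<^sup>2))) \<beta>))"
  shows "0 \<le> b" and "b\<^sup>2 * (norm m)\<^sup>2 \<le> 2 * b * c"
proof -
  have "0 \<le> b \<and> b\<^sup>2 * (norm m)\<^sup>2 \<le> 2 * b * c"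
  proof (cases "m = 0")
    case False
    define q where "q = c / (norm m)\<^sup>2"
    have m2: "(norm m)\<^sup>2 > 0" using False by simp
    have "0 \<le> b \<and> (b = 0 \<or> b \<le> q)"
      using \<beta> unfolding b q_def[symmetric] using False by (cases \<beta>) (auto simp: min_def max_def)
    moreover have "c = q * (norm m)\<^sup>2" unfolding q_def using m2 by simp
    ultimately show ?thesis
      using m2 by (auto simp: power2_eq_square mult_right_mono mult_left_mono algebra_simps
          intro: order_trans[of _ "b * q * (norm m)\<^sup>2"])
  qed (use b in simp)
  then show "0 \<le> b" "b\<^sup>2 * (norm m)\<^sup>2 \<le> 2 * b * c" by auto
qed

locale momentum_landweber =
  fixes R :: "'x::{real_inner,complete_space} \<Rightarrow> ereal"
    and F :: "'x \<Rightarrow> 'y::real_inner"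
    and Lop :: "'x \<Rightarrow> ('x \<Rightarrow>\<^sub>L 'y)"
    and y yd :: 'y
    and x0 \<xi>0 xbar :: 'x
    and \<sigma> \<rho> \<eta> Lc \<delta> \<tau> \<mu>0 \<mu>1 :: real
    and \<beta> :: ereal
    and adaptive :: bool
  assumes R_proper: "proper_fun R"
    and R_lsc: "lsc_fun R"
    and sigma_pos: "\<sigma> > 0"
    and R_sconv: "strongly_convex R \<sigma>"
    and rho_pos: "\<rho> > 0"
    and xi0: "\<xi>0 \<in> subdiff R x0"
    and xbar_sol: "F xbar = y"
    and xbar_breg: "bregman R \<xi>0 xbar x0 \<le> ereal (\<sigma> * \<rho>\<^sup>2)"
    and eta_range: "0 \<le> \<eta>" "\<eta> < 1"
    and tangential: "\<And>x xb. x \<in> cball x0 (2 * \<rho>) \<Longrightarrow> xb \<in> cball x0 (2 * \<rho>) \<Longrightarrow>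
        norm (F x - F xb - blinfun_apply (Lop xb) (x - xb)) \<le> \<eta> * norm (F x - F xb)"
    and Lc_pos: "Lc > 0"
    and L_bound: "\<And>x. x \<in> cball x0 (2 * \<rho>) \<Longrightarrow> norm (Lop x) \<le> Lc"
    and delta_pos: "\<delta> > 0"
    and noise: "norm (yd - y) \<le> \<delta>"
    and tau: "\<tau> > 1"
    and beta_pos: "\<beta> > 0"
    and mu0: "\<mu>0 > 0"
    and mu1: "\<mu>1 > 0"
    and param: "1 - (1 + \<eta>) / \<tau> - \<eta> - \<mu>0 / (4 * \<sigma>) > 0"
begin

text \<open>state n = (xi_n, xi_{n-1}, gamma~_n); iter, res, grad, step, mom, coef are the
  quantities x_n, r_n, g_n, alpha_n, m_n, beta_n of Algorithm 1.\<close>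
definition state where "state = alg1 R F Lop yd \<delta> \<sigma> \<eta> Lc adaptive \<mu>0 \<mu>1 \<beta> \<xi>0"
definition xi where "xi n = fst (state n)"
definition mom where "mom n = xi n - fst (snd (state n))"
definition gam where "gam n = snd (snd (state n))"
definition iter where "iter n = gradconj R (xi n)"
definition res where "res n = F (iter n) - yd"
definition grad where "grad n = adj (Lop (iter n)) (res n)"
definition step where "step n = step_size adaptive \<mu>0 \<mu>1 Lc (res n) (grad n)"
definition coef where
  "coef n = (if mom n = 0 then 0 else
     real_of_ereal (min (ereal (max 0 ((step n * inner (grad n) (mom n) - 2 * \<sigma> * gam n) / (norm (mom n))\<^sup>2))) \<beta>))"

lemma state_Suc:
  "state (Suc n) = (xi n - step n *\<^sub>R grad n + coef n *\<^sub>R mom n, xi n,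
     inner (xi n - step n *\<^sub>R grad n + coef n *\<^sub>R mom n - xi n)
       (gradconj R (xi n - step n *\<^sub>R grad n + coef n *\<^sub>R mom n) - iter n)
     - (1 - \<eta>) * step n * (norm (res n))\<^sup>2 + (1 + \<eta>) * step n * \<delta> * norm (res n) + coef n * gam n)"
proof -
  define p where "p = fst (snd (state n))"
  have state: "state n = (xi n, p, gam n)" by (simp add: xi_def gam_def p_def)
  have mom: "xi n - p = mom n" by (simp add: mom_def p_def)
  show ?thesis
    unfolding state_def alg1.simps(2)
    unfolding state_def[symmetric] state Let_def prod.case
    by (simp only: iter_def[symmetric] res_def[symmetric] grad_def[symmetric] step_def[symmetric]
        mom coef_def[symmetric])
qed

lemma xi_0: "xi 0 = \<xi>0" and mom_0: "mom 0 = 0" and gam_0: "gam 0 = 0"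
  by (simp_all add: xi_def mom_def gam_def state_def)

lemma xi_Suc: "xi (Suc n) = xi n - step n *\<^sub>R grad n + coef n *\<^sub>R mom n"
  by (simp add: xi_def[of "Suc n"] state_Suc)

lemma mom_Suc: "mom (Suc n) = xi (Suc n) - xi n"
  by (simp add: mom_def[of "Suc n"] xi_def[of "Suc n"] state_Suc)

lemma gam_Suc:
  "gam (Suc n) = inner (mom (Suc n)) (iter (Suc n) - iter n)
     - (1 - \<eta>) * step n * (norm (res n))\<^sup>2 + (1 + \<eta>) * step n * \<delta> * norm (res n) + coef n * gam n"
  by (simp add: gam_def[of "Suc n"] state_Suc mom_Suc xi_Suc iter_def[of "Suc n"])

lemma tilted_minimizer_x0: "tilted_minimizer R \<xi>0 x0"
  using subdiff_tilted_minimizer[OF R_proper xi0] .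

lemma iter_tilted_minimizer: "tilted_minimizer R (xi n) (iter n)"
  unfolding iter_def
  using tilted_minimizer_gradconj[OF R_proper R_lsc R_sconv sigma_pos tilted_minimizer_x0] .

lemma iter_0: "iter 0 = x0"
  unfolding iter_def xi_0 using gradconj_eqI[OF R_proper R_sconv sigma_pos tilted_minimizer_x0] .

lemma xbar_effdom: "xbar \<in> effdom R"
proof -
  have "x0 \<in> effdom R" using tilted_minimizer_x0 unfolding tilted_minimizer_def by blast
  then obtain u where "R x0 = ereal u" using proper_effdom_ereal[OF R_proper] by metis
  then show ?thesis using xbar_breg unfolding bregman_def effdom_def by (cases "R xbar") auto
qed

definition breg where
  "breg n = real_of_ereal (R xbar) - real_of_ereal (R (iter n)) - inner (xi n) (xbar - iter n)"

lemma breg_lower: "\<sigma> * (norm (xbar - iter n))\<^sup>2 \<le> breg n"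
  using tilted_minimizer_quadratic_growth[OF R_proper R_sconv iter_tilted_minimizer[of n] xbar_effdom]
  unfolding breg_def by linarith

lemma breg_0: "breg 0 \<le> \<sigma> * \<rho>\<^sup>2"
proof -
  have "x0 \<in> effdom R" using tilted_minimizer_x0 unfolding tilted_minimizer_def by blast
  then obtain u w where "R x0 = ereal u" "R xbar = ereal w"
    using proper_effdom_ereal[OF R_proper] xbar_effdom by metis
  then show ?thesis using xbar_breg unfolding breg_def bregman_def iter_0 xi_0 by simp
qed

lemma norm_xbar_diff_le_rho:
  assumes "\<sigma> * (norm (xbar - z))\<^sup>2 \<le> breg 0"
  shows "norm (xbar - z) \<le> \<rho>"
proof -
  have "\<sigma> * (norm (xbar - z))\<^sup>2 \<le> \<sigma> * \<rho>\<^sup>2" using assms breg_0 by linarith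
  then have "(norm (xbar - z))\<^sup>2 \<le> \<rho>\<^sup>2" using sigma_pos by simp
  then show ?thesis using rho_pos by (meson less_imp_le power2_le_imp_le)
qed

lemma xbar_in_ball: "xbar \<in> cball x0 (2 * \<rho>)"
  using norm_xbar_diff_le_rho[of x0] breg_lower[of 0] rho_pos unfolding iter_0
  by (simp add: dist_norm norm_minus_commute)

lemma iter_in_ball:
  assumes "breg n \<le> breg 0"
  shows "iter n \<in> cball x0 (2 * \<rho>)"
proof -
  have "norm (xbar - x0) \<le> \<rho>" "norm (xbar - iter n) \<le> \<rho>"
    using norm_xbar_diff_le_rho breg_lower[of 0] breg_lower[of n] assms unfolding iter_0 by fastforce+
  have "dist x0 (iter n) \<le> norm (xbar - x0) + norm (xbar - iter n)"
    by (metis dist_norm dist_triangle2 dist_commute)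
  then show ?thesis using \<open>norm (xbar - x0) \<le> \<rho>\<close> \<open>norm (xbar - iter n) \<le> \<rho>\<close> by simp
qed

lemma norm_grad_le:
  assumes "iter n \<in> cball x0 (2 * \<rho>)"
  shows "norm (grad n) \<le> Lc * norm (res n)"
  unfolding grad_def
  using norm_adj_le[of "Lop (iter n)" "res n"] L_bound[OF assms]
  by (meson mult_right_mono norm_ge_zero order_trans)

lemma tangential_estimate:
  assumes ball: "iter n \<in> cball x0 (2 * \<rho>)"
  shows "(1 - \<eta>) * (norm (res n))\<^sup>2 - (1 + \<eta>) * \<delta> * norm (res n) \<le> inner (grad n) (iter n - xbar)"
proof -
  define X where "X = norm (res n)"
  define e where "e = F xbar - F (iter n) - blinfun_apply (Lop (iter n)) (xbar - iter n)"
  have "norm (F xbar - F (iter n)) = norm (res n + (yd - y))"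
    unfolding res_def xbar_sol by (simp add: norm_minus_commute)
  also have "\<dots> \<le> X + \<delta>" using norm_triangle_ineq[of "res n" "yd - y"] noise unfolding X_def by linarith
  finally have "\<eta> * norm (F xbar - F (iter n)) \<le> \<eta> * (X + \<delta>)" using eta_range by (simp add: mult_left_mono)
  then have "norm e \<le> \<eta> * (X + \<delta>)" using tangential[OF xbar_in_ball ball] unfolding e_def by linarith
  then have re: "- (X * (\<eta> * (X + \<delta>))) \<le> inner (res n) e"
    using Cauchy_Schwarz_ineq2[of "res n" e] unfolding X_def
    by (smt (verit, best) abs_le_iff mult_left_mono norm_ge_zero)
  have rn: "- (X * \<delta>) \<le> inner (res n) (yd - y)"
    using Cauchy_Schwarz_ineq2[of "res n" "yd - y"] noise unfolding X_def
    by (smt (verit, best) abs_le_iff mult_left_mono norm_ge_zero)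
  have "blinfun_apply (Lop (iter n)) (iter n - xbar) = e + res n + (yd - y)"
    unfolding e_def res_def xbar_sol[symmetric] by (simp add: blinfun.diff_right algebra_simps)
  then have "inner (grad n) (iter n - xbar) = inner (res n) e + X\<^sup>2 + inner (res n) (yd - y)"
    unfolding grad_def adj_inner X_def by (simp add: inner_add_right power2_norm_eq_inner)
  then show ?thesis using re rn unfolding X_def[symmetric] by (simp add: power2_eq_square algebra_simps)
qed

definition decrease where
  "decrease = min (\<mu>0 / Lc\<^sup>2) \<mu>1 * (1 - (1 + \<eta>) / \<tau> - \<eta> - \<mu>0 / (4 * \<sigma>)) * (\<tau> * \<delta>)\<^sup>2"

lemma decrease_pos: "decrease > 0"
  unfolding decrease_def using param mu0 mu1 Lc_pos tau delta_pos by simp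

lemma min_step_pos: "0 < min (\<mu>0 / Lc\<^sup>2) \<mu>1"
  using mu0 mu1 Lc_pos by simp

lemma step_bounds:
  assumes "iter n \<in> cball x0 (2 * \<rho>)"
  shows "min (\<mu>0 / Lc\<^sup>2) \<mu>1 \<le> step n" and "step n * (norm (grad n))\<^sup>2 \<le> \<mu>0 * (norm (res n))\<^sup>2"
  unfolding step_def using step_size_bounds[OF Lc_pos mu0 mu1 norm_grad_le[OF assms]] by blast+

lemma coef_bounds:
  "0 \<le> coef n"
  "(coef n)\<^sup>2 * (norm (mom n))\<^sup>2 \<le> 2 * coef n * (step n * inner (grad n) (mom n) - 2 * \<sigma> * gam n)"
  using momentum_coefficient_bounds[OF beta_pos coef_def] by blast+

lemma decrease_le:
  assumes a: "min (\<mu>0 / Lc\<^sup>2) \<mu>1 \<le> a" and X: "\<tau> * \<delta> < X"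
  shows "a * (\<mu>0 * X\<^sup>2) / (4 * \<sigma>) - a * ((1 - \<eta>) * X\<^sup>2 - (1 + \<eta>) * \<delta> * X) \<le> - decrease"
proof -
  define c0 where "c0 = 1 - (1 + \<eta>) / \<tau> - \<eta> - \<mu>0 / (4 * \<sigma>)"
  have a0: "0 < a" using min_step_pos a by linarith
  have "0 < \<tau> * \<delta>" using tau delta_pos by simp
  then have X0: "0 < X" using X by linarith
  have "\<tau> * (\<delta> * X) \<le> X\<^sup>2" using X X0 by (simp add: power2_eq_square mult_right_mono)
  then have "\<delta> * X \<le> X\<^sup>2 / \<tau>" using tau by (simp add: pos_le_divide_eq mult.commute)
  then have "a * ((1 + \<eta>) * (\<delta> * X)) \<le> a * ((1 + \<eta>) * (X\<^sup>2 / \<tau>))"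
    using eta_range a0 by (intro mult_left_mono) auto
  moreover have "a * (\<mu>0 * X\<^sup>2) / (4 * \<sigma>) - a * ((1 - \<eta>) * X\<^sup>2 - (1 + \<eta>) * \<delta> * X)
      = - (c0 * (a * X\<^sup>2)) + (a * ((1 + \<eta>) * (\<delta> * X)) - a * ((1 + \<eta>) * (X\<^sup>2 / \<tau>)))"
    using tau sigma_pos unfolding c0_def by (simp add: field_simps)
  ultimately have "a * (\<mu>0 * X\<^sup>2) / (4 * \<sigma>) - a * ((1 - \<eta>) * X\<^sup>2 - (1 + \<eta>) * \<delta> * X)
      \<le> - (c0 * (a * X\<^sup>2))" by linarith
  also have "\<dots> \<le> - decrease"
  proof -
    have "(\<tau> * \<delta>)\<^sup>2 \<le> X\<^sup>2" using X tau delta_pos by (intro power_mono) auto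
    then have "min (\<mu>0 / Lc\<^sup>2) \<mu>1 * (\<tau> * \<delta>)\<^sup>2 \<le> a * X\<^sup>2"
      using a a0 by (intro mult_mono) auto
    then show ?thesis using param unfolding decrease_def c0_def by (simp add: mult_left_mono mult.assoc mult.left_commute)
  qed
  finally show ?thesis .
qed

lemma mom_Suc_inner_le:
  assumes ball: "iter n \<in> cball x0 (2 * \<rho>)" and mom: "inner (mom n) (iter n - xbar) \<le> gam n"
  shows "inner (mom (Suc n)) (iter n - xbar)
    \<le> coef n * gam n - step n * ((1 - \<eta>) * (norm (res n))\<^sup>2 - (1 + \<eta>) * \<delta> * norm (res n))"
proof -
  have "mom (Suc n) = coef n *\<^sub>R mom n - step n *\<^sub>R grad n" by (simp add: mom_Suc xi_Suc)
  then have "inner (mom (Suc n)) (iter n - xbar)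
      = coef n * inner (mom n) (iter n - xbar) - step n * inner (grad n) (iter n - xbar)"
    by (simp add: inner_diff_left)
  moreover have "coef n * inner (mom n) (iter n - xbar) \<le> coef n * gam n"
    using mom coef_bounds(1) by (rule mult_left_mono)
  moreover have "step n * ((1 - \<eta>) * (norm (res n))\<^sup>2 - (1 + \<eta>) * \<delta> * norm (res n))
      \<le> step n * inner (grad n) (iter n - xbar)"
    using tangential_estimate[OF ball] step_bounds(1)[OF ball] min_step_pos
    by (intro mult_left_mono) auto
  ultimately show ?thesis by linarith
qed

lemma gam_invariant_Suc:
  assumes ball: "iter n \<in> cball x0 (2 * \<rho>)" and mom: "inner (mom n) (iter n - xbar) \<le> gam n"
  shows "inner (mom (Suc n)) (iter (Suc n) - xbar) \<le> gam (Suc n)"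
proof -
  have "inner (mom (Suc n)) (iter (Suc n) - xbar)
      = inner (mom (Suc n)) (iter (Suc n) - iter n) + inner (mom (Suc n)) (iter n - xbar)"
    by (simp add: inner_diff_right)
  moreover have "step n * ((1 - \<eta>) * (norm (res n))\<^sup>2 - (1 + \<eta>) * \<delta> * norm (res n))
      = (1 - \<eta>) * step n * (norm (res n))\<^sup>2 - (1 + \<eta>) * step n * \<delta> * norm (res n)"
    by (simp add: algebra_simps)
  ultimately show ?thesis using mom_Suc_inner_le[OF ball mom] unfolding gam_Suc by linarith
qed

lemma breg_Suc_le:
  assumes ball: "iter n \<in> cball x0 (2 * \<rho>)" and res: "\<tau> * \<delta> < norm (res n)"
    and mom: "inner (mom n) (iter n - xbar) \<le> gam n"
  shows "breg (Suc n) \<le> breg n - decrease"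
proof -
  define a b g m X where "a = step n" "b = coef n" "g = grad n" "m = mom n" "X = norm (res n)"
  have d: "mom (Suc n) = b *\<^sub>R m - a *\<^sub>R g" unfolding a_b_g_m_X_def by (simp add: mom_Suc xi_Suc)
  have "(norm (mom (Suc n)))\<^sup>2 = a * (a * (norm g)\<^sup>2) - 2 * a * b * inner g m + b\<^sup>2 * (norm m)\<^sup>2"
    unfolding d power2_norm_eq_inner
    by (simp add: inner_diff_left inner_diff_right inner_commute power2_eq_square algebra_simps)
  also have "\<dots> \<le> a * (\<mu>0 * X\<^sup>2) - 4 * \<sigma> * (b * gam n)"
  proof -
    have "a * (a * (norm g)\<^sup>2) \<le> a * (\<mu>0 * X\<^sup>2)"
      using step_bounds[OF ball] min_step_pos unfolding a_b_g_m_X_def by (intro mult_left_mono) auto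
    moreover have "2 * b * (a * inner g m - 2 * \<sigma> * gam n) = 2 * a * b * inner g m - 4 * \<sigma> * (b * gam n)"
      by (simp add: algebra_simps)
    ultimately show ?thesis using coef_bounds(2)[of n] unfolding a_b_g_m_X_def by linarith
  qed
  finally have "(norm (mom (Suc n)))\<^sup>2 / (4 * \<sigma>) \<le> a * (\<mu>0 * X\<^sup>2) / (4 * \<sigma>) - b * gam n"
    using sigma_pos by (simp add: field_simps)
  moreover have "breg (Suc n) - breg n
      \<le> (norm (mom (Suc n)))\<^sup>2 / (4 * \<sigma>) + inner (mom (Suc n)) (iter n - xbar)"
    using tilted_minimizer_three_point[OF R_proper R_sconv sigma_pos iter_tilted_minimizer[of n]
        iter_tilted_minimizer[of "Suc n"] xbar_effdom]
    unfolding breg_def mom_Suc by linarith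
  ultimately show ?thesis
    using mom_Suc_inner_le[OF ball mom] decrease_le[OF step_bounds(1)[OF ball] res]
    unfolding a_b_g_m_X_def by linarith
qed

lemma descent_invariant:
  assumes "\<forall>k<n. \<tau> * \<delta> < norm (res k)"
  shows "breg n \<le> breg 0 - real n * decrease \<and> inner (mom n) (iter n - xbar) \<le> gam n"
  using assms
proof (induction n)
  case 0
  then show ?case by (simp add: mom_0 gam_0)
next
  case (Suc n)
  then have breg: "breg n \<le> breg 0 - real n * decrease"
    and mom: "inner (mom n) (iter n - xbar) \<le> gam n" and res: "\<tau> * \<delta> < norm (res n)" by auto
  have "0 \<le> real n * decrease" using decrease_pos by simp
  then have "iter n \<in> cball x0 (2 * \<rho>)" using breg by (intro iter_in_ball) linarith
  then show ?case using breg_Suc_le[OF _ res mom] gam_invariant_Suc[OF _ mom] breg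
    by (simp add: algebra_simps)
qed

lemma discrepancy_reached: "\<exists>n. norm (res n) \<le> \<tau> * \<delta>"
proof (rule ccontr)
  assume "\<not> ?thesis"
  then have "\<forall>k<n. \<tau> * \<delta> < norm (res k)" for n by (simp add: not_le)
  then have breg: "breg n \<le> breg 0 - real n * decrease" for n using descent_invariant[of n] by simp
  obtain N where "breg 0 / decrease < real N" using reals_Archimedean2 by blast
  then have "breg 0 - real N * decrease < 0" using decrease_pos by (simp add: pos_divide_less_eq)
  moreover have "0 \<le> \<sigma> * (norm (xbar - iter N))\<^sup>2" using sigma_pos by simp
  then have "0 \<le> breg N" using breg_lower[of N] by linarith
  ultimately show False using breg[of N] by linarith
qed

end

theorem mainTheorem3:
  fixes R :: "'x::{real_inner, complete_space} \<Rightarrow> ereal"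
    and F :: "'x \<Rightarrow> 'y::{real_inner, complete_space}"
    and D :: "'x set"
    and Lop :: "'x \<Rightarrow> ('x \<Rightarrow>\<^sub>L 'y)"
    and y yd :: 'y
    and x0 \<xi>0 xbar :: 'x
    and \<sigma> \<rho> \<eta> Lc \<delta> \<tau> \<mu>0 \<mu>1 :: real
    and \<beta> :: ereal
    and adaptive :: bool
  assumes R_proper: "proper_fun R"
    and R_lsc: "lsc_fun R"
    and sigma_pos: "\<sigma> > 0"
    and R_sconv: "strongly_convex R \<sigma>"
    \<comment> \<open>(b)\<close>
    and rho_pos: "\<rho> > 0"
    and xi0: "\<xi>0 \<in> subdiff R x0"
    and ball_dom: "cball x0 (2 * \<rho>) \<subseteq> D"
    and xbar_dom: "xbar \<in> D"
    and xbar_sol: "F xbar = y"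
    and xbar_breg: "bregman R \<xi>0 xbar x0 \<le> ereal (\<sigma> * \<rho>\<^sup>2)"
    \<comment> \<open>(c)\<close>
    and F_wclosed: "\<And>xs x v. (\<forall>n. xs n \<in> D) \<Longrightarrow> weak_conv xs x \<Longrightarrow>
                       (\<lambda>n. F (xs n)) \<longlonglongrightarrow> v \<Longrightarrow> x \<in> D \<and> F x = v"
    \<comment> \<open>(d)\<close>
    and L_cont: "continuous_on (cball x0 (2 * \<rho>)) Lop"
    and eta_range: "0 \<le> \<eta>" "\<eta> < 1"
    and tangential: "\<And>x xb. x \<in> cball x0 (2 * \<rho>) \<Longrightarrow> xb \<in> cball x0 (2 * \<rho>) \<Longrightarrow>
        norm (F x - F xb - blinfun_apply (Lop xb) (x - xb)) \<le> \<eta> * norm (F x - F xb)"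
    and Lc_pos: "Lc > 0"
    and L_bound: "\<And>x. x \<in> cball x0 (2 * \<rho>) \<Longrightarrow> norm (Lop x) \<le> Lc"
    \<comment> \<open>noisy data and parameters\<close>
    and delta_pos: "\<delta> > 0"
    and noise: "norm (yd - y) \<le> \<delta>"
    and tau: "\<tau> > 1"
    and beta_pos: "\<beta> > 0"
    and mu0: "\<mu>0 > 0"
    and mu1: "\<mu>1 > 0"
    and param: "1 - (1 + \<eta>) / \<tau> - \<eta> - \<mu>0 / (4 * \<sigma>) > 0"
  shows "\<exists>n\<delta>::nat.
           norm (F (alg1_x R F Lop yd \<delta> \<sigma> \<eta> Lc adaptive \<mu>0 \<mu>1 \<beta> \<xi>0 n\<delta>) - yd) \<le> \<tau> * \<delta> \<and>
           (\<forall>n<n\<delta>. \<tau> * \<delta> < norm (F (alg1_x R F Lop yd \<delta> \<sigma> \<eta> Lc adaptive \<mu>0 \<mu>1 \<beta> \<xi>0 n) - yd))"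
proof -
  interpret momentum_landweber R F Lop y yd x0 \<xi>0 xbar \<sigma> \<rho> \<eta> Lc \<delta> \<tau> \<mu>0 \<mu>1 \<beta> adaptive
    by (unfold_locales; fact assms)
  have "alg1_x R F Lop yd \<delta> \<sigma> \<eta> Lc adaptive \<mu>0 \<mu>1 \<beta> \<xi>0 n = iter n" for n
    by (simp add: alg1_x_def iter_def xi_def state_def)
  then show ?thesis
    using discrepancy_reached exists_least_iff[of "\<lambda>n. norm (res n) \<le> \<tau> * \<delta>"]
    unfolding res_def by (auto simp: not_le)
qed

end
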